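(* Let $\Gamma=(V,E)$ be a graph of order $n$, minimum degree $\delta$ and maximum degree $\Delta$, and let $\bar{\Gamma}=(V,\bar E)$ be its complement. Let $k$ be an integer. (a) Every dominating set $S\subseteq V$ in $\bar{\Gamma}$ with $|S|\ge\left\lceil\frac{n+k+\Delta-1}{2}\right\rceil$ is a global offensive $k$-alliance in $\bar{\Gamma}$. (b) Every dominating set $S\subseteq V$ in $\Gamma$ with $|S|\ge\left\lceil\frac{2n+k-\delta-2}{2}\right\rceil$ is a global offensive $k$-alliance in $\Gamma$.
   Context: Graphs are finite and simple. In a graph $G$, for $S\subseteq V$ and $v\in V$, $\delta_S(v)$ is the number of neighbours of $v$ in $S$, $\overline{S}=V\setminus S$, and $\partial(S)$ the set of vertices of $\overline{S}$ with a neighbour in $S$. A nonempty $S$ is an offensive $k$-alliance in $G$ if $\delta_S(v)\ge\delta_{\overline{S}}(v)+k$ for all $v\in\partial(S)$, and a global offensive $k$-alliance if moreover it is dominating in $G$. *)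

theory Defs
  imports Complex_Main
begin

definition graph :: "'a set \<Rightarrow> ('a \<Rightarrow> 'a \<Rightarrow> bool) \<Rightarrow> bool" where
  "graph V E \<longleftrightarrow> finite V \<and> (\<forall>u v. E u v \<longrightarrow> u \<in> V \<and> v \<in> V)
      \<and> (\<forall>u v. E u v \<longrightarrow> E v u) \<and> (\<forall>v. \<not> E v v)"

definition compl_graph :: "'a set \<Rightarrow> ('a \<Rightarrow> 'a \<Rightarrow> bool) \<Rightarrow> 'a \<Rightarrow> 'a \<Rightarrow> bool" where
  "compl_graph V E = (\<lambda>u v. u \<in> V \<and> v \<in> V \<and> u \<noteq> v \<and> \<not> E u v)"

definition degree :: "'a set \<Rightarrow> ('a \<Rightarrow> 'a \<Rightarrow> bool) \<Rightarrow> 'a \<Rightarrow> nat" where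
  "degree V E v = card {u \<in> V. E v u}"

definition min_degree :: "'a set \<Rightarrow> ('a \<Rightarrow> 'a \<Rightarrow> bool) \<Rightarrow> nat" where
  "min_degree V E = Min (degree V E ` V)"

definition max_degree :: "'a set \<Rightarrow> ('a \<Rightarrow> 'a \<Rightarrow> bool) \<Rightarrow> nat" where
  "max_degree V E = Max (degree V E ` V)"

definition nbrs_in :: "('a \<Rightarrow> 'a \<Rightarrow> bool) \<Rightarrow> 'a set \<Rightarrow> 'a \<Rightarrow> nat" where
  "nbrs_in E S v = card {u \<in> S. E v u}"

definition boundary :: "'a set \<Rightarrow> ('a \<Rightarrow> 'a \<Rightarrow> bool) \<Rightarrow> 'a set \<Rightarrow> 'a set" where
  "boundary V E S = {v \<in> V - S. \<exists>u \<in> S. E v u}"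

definition dominating :: "'a set \<Rightarrow> ('a \<Rightarrow> 'a \<Rightarrow> bool) \<Rightarrow> 'a set \<Rightarrow> bool" where
  "dominating V E S \<longleftrightarrow> S \<subseteq> V \<and> (\<forall>v \<in> V - S. \<exists>u \<in> S. E v u)"

definition offensive_alliance :: "'a set \<Rightarrow> ('a \<Rightarrow> 'a \<Rightarrow> bool) \<Rightarrow> int \<Rightarrow> 'a set \<Rightarrow> bool" where
  "offensive_alliance V E k S \<longleftrightarrow> S \<noteq> {} \<and> S \<subseteq> V \<and>
     (\<forall>v \<in> boundary V E S. int (nbrs_in E S v) \<ge> int (nbrs_in E (V - S) v) + k)"

definition global_offensive_alliance :: "'a set \<Rightarrow> ('a \<Rightarrow> 'a \<Rightarrow> bool) \<Rightarrow> int \<Rightarrow> 'a set \<Rightarrow> bool" where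
  "global_offensive_alliance V E k S \<longleftrightarrow> offensive_alliance V E k S \<and> dominating V E S"

end

theory Submission
  imports Defs
begin

text \<open>A vertex \<open>v\<close> outside \<open>S\<close> has at most \<open>n - |S| - 1\<close> neighbours outside \<open>S\<close>.
  In \<open>\<Gamma>\<close> it therefore has at least \<open>deg v - (n - |S| - 1) \<ge> \<delta> - (n - |S| - 1)\<close> neighbours
  in \<open>S\<close>, and in the complement at least \<open>|S| - deg v \<ge> |S| - \<Delta>\<close>, since every vertex of
  \<open>S\<close> that is not a \<open>\<Gamma>\<close>-neighbour of \<open>v\<close> is a neighbour in the complement. In both cases the lower bound
  on \<open>|S|\<close> is exactly what makes the surplus of inside over outside neighbours at least \<open>k\<close>.\<close>

lemma graph_finite: "graph V E \<Longrightarrow> finite V"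
  unfolding graph_def by simp

lemma graph_compl_graph: "graph V E \<Longrightarrow> graph V (compl_graph V E)"
  unfolding graph_def compl_graph_def by auto

lemma degree_bounds:
  assumes "finite V" "v \<in> V"
  shows min_degree_le_degree: "min_degree V E \<le> degree V E v"
    and degree_le_max_degree: "degree V E v \<le> max_degree V E"
  using assms unfolding min_degree_def max_degree_def by auto

lemma nbrs_in_outside_le:
  assumes "graph V E" "S \<subseteq> V" "v \<in> V - S"
  shows "nbrs_in E (V - S) v + card S + 1 \<le> card V"
proof -
  have fin: "finite V" using assms(1) by (rule graph_finite)
  have "{u \<in> V - S. E v u} \<subseteq> V - S - {v}"
    using assms(1) unfolding graph_def by auto
  then have "nbrs_in E (V - S) v \<le> card (V - S - {v})"
    unfolding nbrs_in_def using fin by (intro card_mono) auto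
  also have "\<dots> = card V - card S - 1"
    using assms(2,3) fin by (simp add: card_Diff_subset finite_subset)
  moreover have "card (insert v S) \<le> card V"
    using assms(2,3) fin by (intro card_mono) auto
  ultimately show ?thesis
    using assms(2,3) fin by (simp add: finite_subset)
qed

lemma nbrs_in_add_nbrs_in_Diff:
  assumes "graph V E" "S \<subseteq> V"
  shows "nbrs_in E S v + nbrs_in E (V - S) v = degree V E v"
proof -
  have fin: "finite V" using assms(1) by (rule graph_finite)
  have "{u \<in> V. E v u} = {u \<in> S. E v u} \<union> {u \<in> V - S. E v u}"
    using assms(2) by auto
  moreover have "card ({u \<in> S. E v u} \<union> {u \<in> V - S. E v u})
      = card {u \<in> S. E v u} + card {u \<in> V - S. E v u}"
    using fin assms(2) by (intro card_Un_disjoint) (auto intro: finite_subset)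
  ultimately show ?thesis unfolding nbrs_in_def degree_def by simp
qed

lemma nbrs_in_compl_graph_add_nbrs_in:
  assumes "finite V" "S \<subseteq> V" "v \<in> V - S"
  shows "nbrs_in (compl_graph V E) S v + nbrs_in E S v = card S"
proof -
  have "S = {u \<in> S. compl_graph V E v u} \<union> {u \<in> S. E v u}"
    using assms by (auto simp: compl_graph_def)
  moreover have "card ({u \<in> S. compl_graph V E v u} \<union> {u \<in> S. E v u})
      = card {u \<in> S. compl_graph V E v u} + card {u \<in> S. E v u}"
    using assms by (intro card_Un_disjoint) (auto intro: finite_subset simp: compl_graph_def)
  ultimately show ?thesis unfolding nbrs_in_def by simp
qed

lemma global_offensive_allianceI:
  assumes "dominating V E S" "V \<noteq> {}"
    and "\<And>v. v \<in> V - S \<Longrightarrow> int (nbrs_in E S v) \<ge> int (nbrs_in E (V - S) v) + k"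
  shows "global_offensive_alliance V E k S"
  using assms unfolding global_offensive_alliance_def offensive_alliance_def
    dominating_def boundary_def by auto

lemma global_offensive_alliance_if_card_ge_min_degree:
  assumes "graph V E" "V \<noteq> {}" "dominating V E S"
    and "2 * int (card V) + k - int (min_degree V E) - 2 \<le> 2 * int (card S)"
  shows "global_offensive_alliance V E k S"
proof (rule global_offensive_allianceI[OF assms(3,2)])
  fix v assume v: "v \<in> V - S"
  have S: "S \<subseteq> V" using assms(3) unfolding dominating_def by simp
  have "nbrs_in E (V - S) v + card S + 1 \<le> card V"
    using nbrs_in_outside_le[OF assms(1) S v] .
  moreover have "nbrs_in E S v + nbrs_in E (V - S) v = degree V E v"
    using nbrs_in_add_nbrs_in_Diff[OF assms(1) S] .
  moreover have "min_degree V E \<le> degree V E v"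
    using graph_finite[OF assms(1)] v by (intro min_degree_le_degree) auto
  ultimately show "int (nbrs_in E S v) \<ge> int (nbrs_in E (V - S) v) + k"
    using assms(4) by linarith
qed

lemma global_offensive_alliance_compl_graph_if_card_ge_max_degree:
  assumes "graph V E" "V \<noteq> {}" "dominating V (compl_graph V E) S"
    and "int (card V) + k + int (max_degree V E) - 1 \<le> 2 * int (card S)"
  shows "global_offensive_alliance V (compl_graph V E) k S"
proof (rule global_offensive_allianceI[OF assms(3,2)])
  fix v assume v: "v \<in> V - S"
  have fin: "finite V" using assms(1) by (rule graph_finite)
  have S: "S \<subseteq> V" using assms(3) unfolding dominating_def by simp
  have "nbrs_in (compl_graph V E) (V - S) v + card S + 1 \<le> card V"
    using nbrs_in_outside_le[OF graph_compl_graph[OF assms(1)] S v] .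
  moreover have "nbrs_in (compl_graph V E) S v + nbrs_in E S v = card S"
    using nbrs_in_compl_graph_add_nbrs_in[OF fin S v] .
  moreover have "nbrs_in E S v \<le> degree V E v"
    using nbrs_in_add_nbrs_in_Diff[OF assms(1) S] by (metis le_add1)
  moreover have "degree V E v \<le> max_degree V E"
    using fin v by (intro degree_le_max_degree) auto
  ultimately show "int (nbrs_in (compl_graph V E) S v)
      \<ge> int (nbrs_in (compl_graph V E) (V - S) v) + k"
    using assms(4) by linarith
qed

lemma ceiling_half_le_iff: "\<lceil>real_of_int a / 2\<rceil> \<le> m \<longleftrightarrow> a \<le> 2 * m"
proof -
  have "real_of_int a / 2 \<le> real_of_int m \<longleftrightarrow> real_of_int a \<le> real_of_int (2 * m)"
    by (simp add: mult.commute)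
  then show ?thesis unfolding ceiling_le_iff of_int_le_iff .
qed

theorem mainTheorem10:
  fixes V :: "'a set" and E :: "'a \<Rightarrow> 'a \<Rightarrow> bool" and k :: int
  assumes "graph V E" and "V \<noteq> {}"
  shows "(\<forall>S. dominating V (compl_graph V E) S \<and>
            int (card S) \<ge> \<lceil>(real (card V) + real_of_int k + real (max_degree V E) - 1) / 2\<rceil>
            \<longrightarrow> global_offensive_alliance V (compl_graph V E) k S)
       \<and> (\<forall>S. dominating V E S \<and>
            int (card S) \<ge> \<lceil>(2 * real (card V) + real_of_int k - real (min_degree V E) - 2) / 2\<rceil>
            \<longrightarrow> global_offensive_alliance V E k S)"
proof -
  have "real (card V) + real_of_int k + real (max_degree V E) - 1
      = real_of_int (int (card V) + k + int (max_degree V E) - 1)"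
   and "2 * real (card V) + real_of_int k - real (min_degree V E) - 2
      = real_of_int (2 * int (card V) + k - int (min_degree V E) - 2)"
    by simp_all
  then show ?thesis
    using global_offensive_alliance_compl_graph_if_card_ge_max_degree[OF assms]
      global_offensive_alliance_if_card_ge_min_degree[OF assms]
    by (simp only: ceiling_half_le_iff) blast
qed

end
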